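(* Let $h$ and $a$ be positive integers and let $k = a^2$. Then $\left((a-1)h+1\right)^2 \in \mathcal{R}_{\mathbf{Z}}(h,k)$.
   Context: For a positive integer $h$ and a finite set $A$ of integers, $hA$ denotes the set of all sums $a_1+\cdots+a_h$ with $a_1,\ldots,a_h \in A$ (not necessarily distinct). The sumset size set is $\mathcal{R}_{\mathbf{Z}}(h,k) = \{ |hA| : A \subseteq \mathbf{Z},\ |A| = k\}$. *)

theory Defs
  imports Main
begin

definition hsumset :: "nat \<Rightarrow> int set \<Rightarrow> int set" where
  "hsumset h A = {sum_list xs | xs. length xs = h \<and> set xs \<subseteq> A}"

definition sumset_sizes :: "nat \<Rightarrow> nat \<Rightarrow> nat set" where
  "sumset_sizes h k = {card (hsumset h A) | A. finite A \<and> card A = k}"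

end

theory Submission
  imports Defs
begin

text \<open>
  Embed the square \<open>{0..a-1}\<^sup>2\<close> into \<open>\<int>\<close> by \<open>(x, y) \<mapsto> x + M y\<close>. The \<open>h\<close>-fold sumset of
  the image is the image of the square \<open>{0..(a-1)h}\<^sup>2\<close>, and for \<open>M = (a-1)h + 1\<close> the map is
  injective on both squares, so the two sets have \<open>a\<^sup>2\<close> and \<open>((a-1)h + 1)\<^sup>2\<close> elements.
\<close>

lemma hsumset_0: "hsumset 0 A = {0}"
  unfolding hsumset_def by auto

lemma hsumset_Suc: "hsumset (Suc h) A = {x + s | x s. x \<in> A \<and> s \<in> hsumset h A}"
proof
  show "hsumset (Suc h) A \<subseteq> {x + s | x s. x \<in> A \<and> s \<in> hsumset h A}"
  proof
    fix t assume "t \<in> hsumset (Suc h) A"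
    then obtain xs where xs: "length xs = Suc h" "set xs \<subseteq> A" "t = sum_list xs"
      unfolding hsumset_def by auto
    then obtain y ys where "xs = y # ys" by (cases xs) auto
    with xs show "t \<in> {x + s | x s. x \<in> A \<and> s \<in> hsumset h A}"
      unfolding hsumset_def by auto
  qed
next
  show "{x + s | x s. x \<in> A \<and> s \<in> hsumset h A} \<subseteq> hsumset (Suc h) A"
  proof
    fix t assume "t \<in> {x + s | x s. x \<in> A \<and> s \<in> hsumset h A}"
    then obtain x ys where "x \<in> A" "length ys = h" "set ys \<subseteq> A" "t = x + sum_list ys"
      unfolding hsumset_def by auto
    then show "t \<in> hsumset (Suc h) A"
      unfolding hsumset_def by (auto intro!: exI[of _ "x # ys"])
  qed
qed

lemma atLeastAtMost_add_split:
  fixes z m n :: int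
  assumes "0 \<le> m" "0 \<le> n" "z \<in> {0..m + n}"
  obtains z1 z2 where "z1 \<in> {0..m}" "z2 \<in> {0..n}" "z = z1 + z2"
  using assms by (intro that[of "min z m" "z - min z m"]) auto

definition grid :: "int \<Rightarrow> int \<Rightarrow> int set" where
  "grid M N = (\<lambda>(x, y). x + M * y) ` ({0..N} \<times> {0..N})"

lemma finite_grid: "finite (grid M N)"
  unfolding grid_def by simp

lemma grid_plus:
  assumes "0 \<le> m" "0 \<le> n"
  shows "{s + t | s t. s \<in> grid M m \<and> t \<in> grid M n} = grid M (m + n)"
proof
  show "{s + t | s t. s \<in> grid M m \<and> t \<in> grid M n} \<subseteq> grid M (m + n)"
  proof
    fix u assume "u \<in> {s + t | s t. s \<in> grid M m \<and> t \<in> grid M n}"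
    then obtain x1 y1 x2 y2 where
      "x1 \<in> {0..m}" "y1 \<in> {0..m}" "x2 \<in> {0..n}" "y2 \<in> {0..n}"
      and u: "u = (x1 + M * y1) + (x2 + M * y2)"
      unfolding grid_def by auto
    moreover have "u = (x1 + x2) + M * (y1 + y2)"
      using u by (simp add: algebra_simps)
    ultimately show "u \<in> grid M (m + n)"
      unfolding grid_def by (intro image_eqI[of _ _ "(x1 + x2, y1 + y2)"]) auto
  qed
next
  show "grid M (m + n) \<subseteq> {s + t | s t. s \<in> grid M m \<and> t \<in> grid M n}"
  proof
    fix u assume "u \<in> grid M (m + n)"
    then obtain x y where "x \<in> {0..m + n}" "y \<in> {0..m + n}" and u: "u = x + M * y"
      unfolding grid_def by auto
    then obtain x1 x2 y1 y2 where
      "x1 \<in> {0..m}" "x2 \<in> {0..n}" "x = x1 + x2"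
      "y1 \<in> {0..m}" "y2 \<in> {0..n}" "y = y1 + y2"
      using atLeastAtMost_add_split[OF assms] by metis
    moreover have "x1 + M * y1 \<in> grid M m" "x2 + M * y2 \<in> grid M n"
      using calculation unfolding grid_def by auto
    moreover have "u = (x1 + M * y1) + (x2 + M * y2)"
      using u calculation by (simp add: algebra_simps)
    ultimately show "u \<in> {s + t | s t. s \<in> grid M m \<and> t \<in> grid M n}"
      by blast
  qed
qed

lemma hsumset_grid:
  assumes "0 \<le> n"
  shows "hsumset h (grid M n) = grid M (n * int h)"
proof (induction h)
  case 0
  show ?case by (auto simp: hsumset_0 grid_def)
next
  case (Suc h)
  have "hsumset (Suc h) (grid M n) = {s + t | s t. s \<in> grid M n \<and> t \<in> grid M (n * int h)}"
    by (simp add: hsumset_Suc Suc.IH)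
  also have "\<dots> = grid M (n + n * int h)"
    using assms by (simp add: grid_plus)
  finally show ?case
    by (simp add: algebra_simps)
qed

lemma card_grid:
  assumes "0 \<le> N" "N < M"
  shows "card (grid M N) = nat (N + 1) ^ 2"
proof -
  have "inj_on (\<lambda>(x, y). x + M * y) ({0..N} \<times> {0..N})"
  proof (rule inj_onI, clarify)
    fix x y x' y' :: int
    assume "x \<in> {0..N}" "y \<in> {0..N}" "x' \<in> {0..N}" "y' \<in> {0..N}"
      and eq: "x + M * y = x' + M * y'"
    then have "0 \<le> x" "x < M" "0 \<le> x'" "x' < M"
      using assms by auto
    then have "x = (x + M * y) mod M" "x' = (x' + M * y') mod M"
      by simp_all
    then have "x = x'"
      using eq by metis
    then show "x = x' \<and> y = y'"
      using eq assms by simp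
  qed
  then have "card (grid M N) = card ({0..N} \<times> {0..N})"
    unfolding grid_def by (rule card_image)
  also have "\<dots> = nat (N + 1) ^ 2"
    by (simp add: card_cartesian_product power2_eq_square)
  finally show ?thesis .
qed

theorem mainTheorem5:
  fixes h a k :: nat
  assumes "h \<ge> 1" and "a \<ge> 1" and "k = a ^ 2"
  shows "((a - 1) * h + 1) ^ 2 \<in> sumset_sizes h k"
proof -
  define n where "n = a - 1"
  define M where "M = int (n * h + 1)"
  define A where "A = grid M (int n)"
  have "n \<le> n * h"
    using \<open>h \<ge> 1\<close> by simp
  then have "int n < M"
    unfolding M_def by linarith
  then have "card A = k"
    using assms by (simp add: A_def n_def card_grid nat_int_add)
  moreover have "card (hsumset h A) = ((a - 1) * h + 1) ^ 2"
    by (simp add: A_def M_def n_def hsumset_grid card_grid flip: of_nat_mult)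
  moreover have "finite A"
    by (simp add: A_def finite_grid)
  ultimately show ?thesis
    unfolding sumset_sizes_def by (metis (mono_tags, lifting) mem_Collect_eq)
qed

end
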